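(* Let $r_0>0$, $\eta>0$, and let $C_0\subset\mathbb{R}^2$ be the circle of radius $r_0$ centered at the origin, taken as the data set. For $r>0$ let $C_r$ be the circle of radius $r$ centered at the origin, and for $s\in\{1,2\}$ consider $$E_s(C_r)=\left(\int_{C_r} d(\mathbf{x})^{s}\, d\sigma\right)^{1/s}+\eta \left(\int_{C_r} |\kappa(\mathbf{x})|^{s}\,d\sigma\right)^{1/s}=(2\pi)^{1/s}\left(|r-r_0|\,r^{1/s}+\eta\, r^{1/s-1}\right),$$ where $d(\mathbf{x})$ is the distance from $\mathbf{x}$ to $C_0$ (so $d=|r-r_0|$ on $C_r$) and $\kappa=1/r$ is the curvature of $C_r$. Then, viewing $E_s(C_r)$ as a function of $r>0$: (i) for $s=1$, $r=r_0$ is a local minimizer of $E_1(C_r)$ for every $\eta>0$; (ii) for $s=2$, $r=r_0$ is a local minimizer of $E_2(C_r)$ if $\eta\le 2r_0^2$, and $r=\big(r_0+\sqrt{r_0^2+12\eta}\big)/6$ is a local minimizer of $E_2(C_r)$ if $\eta>2r_0^2$.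
   Context: $d\sigma$ denotes arc length on the circle. The energy is the paper's curvature-regularized reconstruction energy $E_s(\Gamma)=(\int_\Gamma |d|^s d\sigma)^{1/s}+\eta(\int_\Gamma|\kappa|^s d\sigma)^{1/s}$ restricted to circles concentric with the data circle. *)

theory Defs
  imports "HOL-Analysis.Analysis"
begin

definition circ :: "real \<Rightarrow> (real \<times> real) set" where
  "circ r = {x. norm x = r}"

text \<open>Line integral w.r.t. arc length over the circle C_r, via the parametrisation
  t \<mapsto> (r cos t, r sin t), t in [0, 2 pi], whose speed is r.\<close>
definition circ_integral :: "real \<Rightarrow> (real \<times> real \<Rightarrow> real) \<Rightarrow> real" where
  "circ_integral r f = integral {0..2*pi} (\<lambda>t. f (r * cos t, r * sin t) * r)"

definition energy :: "real \<Rightarrow> real \<Rightarrow> real \<Rightarrow> real \<Rightarrow> real" where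
  "energy s r0 \<eta> r =
     (circ_integral r (\<lambda>x. infdist x (circ r0) powr s)) powr (1 / s)
     + \<eta> * (circ_integral r (\<lambda>x. \<bar>1 / r\<bar> powr s)) powr (1 / s)"

definition local_minimizer :: "(real \<Rightarrow> real) \<Rightarrow> real \<Rightarrow> bool" where
  "local_minimizer f a \<longleftrightarrow> a > 0 \<and>
     (\<exists>\<epsilon>>0. \<forall>r>0. \<bar>r - a\<bar> < \<epsilon> \<longrightarrow> f a \<le> f r)"

end

theory Submission
  imports Defs
begin

text \<open>On a concentric circle both integrands are constant, so the energies are explicit functions
  of the radius: \<open>E\<^sub>1(C\<^sub>r) = 2\<pi> (r \<bar>r - r\<^sub>0\<bar> + \<eta>)\<close> is minimal exactly at \<open>r\<^sub>0\<close>, and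
  \<open>E\<^sub>2(C\<^sub>r) = \<surd>(2\<pi>) g(\<surd>r)\<close> with \<open>g u = \<bar>u\<^sup>2 - r\<^sub>0\<bar> u + \<eta> / u\<close>. Writing \<open>r\<^sub>0 = a\<^sup>2\<close>, clearing the
  denominator of \<open>g u - g v\<close> leaves a polynomial that factors explicitly: for \<open>\<eta> \<le> 2 a\<^sup>4\<close> its sign
  shows that \<open>u = a\<close> is a global minimum, and for \<open>\<eta> = b\<^sup>2 (3 b\<^sup>2 - a\<^sup>2)\<close>, which is the critical-point
  equation solved by the stated radius \<open>b\<^sup>2\<close>, it contains the square \<open>(u - b)\<^sup>2\<close>.\<close>

lemma infdist_sphere:
  fixes x :: "'a::{real_normed_vector, perfect_space}"
  assumes "r \<ge> 0"
  shows "infdist x (sphere 0 r) = \<bar>norm x - r\<bar>"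
proof (rule antisym)
  obtain y :: 'a where y: "y \<in> sphere 0 r" "dist x y \<le> \<bar>norm x - r\<bar>"
  proof (cases "x = 0")
    case True
    obtain y :: 'a where "norm y = r" using vector_choose_size assms by metis
    then show ?thesis using True assms by (intro that[of y]) auto
  next
    case False
    have "dist x ((r / norm x) *\<^sub>R x) = norm ((1 - r / norm x) *\<^sub>R x)"
      by (simp add: dist_norm algebra_simps)
    also have "\<dots> = \<bar>(1 - r / norm x) * norm x\<bar>"
      by (simp add: abs_mult)
    also have "\<dots> = \<bar>norm x - r\<bar>"
      using False by (simp add: algebra_simps)
    finally show ?thesis using False assms by (intro that[of "(r / norm x) *\<^sub>R x"]) auto
  qed
  then show "infdist x (sphere 0 r) \<le> \<bar>norm x - r\<bar>"
    by (meson infdist_le order_trans)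
  have "sphere (0::'a) r \<noteq> {}" using y(1) by blast
  then show "\<bar>norm x - r\<bar> \<le> infdist x (sphere 0 r)"
    unfolding infdist_notempty[OF \<open>sphere 0 r \<noteq> {}\<close>]
  proof (rule cINF_greatest)
    fix z :: 'a assume "z \<in> sphere 0 r"
    then show "\<bar>norm x - r\<bar> \<le> dist x z"
      using norm_triangle_ineq3[of x z] by (simp add: dist_norm)
  qed
qed

lemma circ_eq_sphere: "circ r = sphere 0 r"
  by (auto simp: circ_def)

lemma circ_integral_const:
  assumes "r \<ge> 0" and "\<And>x. norm x = r \<Longrightarrow> f x = c"
  shows "circ_integral r f = 2 * pi * r * c"
proof -
  have "norm (r * cos t, r * sin t) = r" for t
  proof -
    have "(r * cos t)\<^sup>2 + (r * sin t)\<^sup>2 = r\<^sup>2"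
      by (simp add: power_mult_distrib flip: distrib_left)
    then show ?thesis using assms(1) by (simp add: norm_Pair)
  qed
  then show ?thesis
    unfolding circ_integral_def using assms(2) by simp
qed

lemma energy_1_circ:
  assumes "r0 \<ge> 0" "r > 0"
  shows "energy 1 r0 \<eta> r = 2 * pi * (r * \<bar>r - r0\<bar> + \<eta>)"
proof -
  have "circ_integral r (\<lambda>x. infdist x (circ r0) powr 1) = 2 * pi * r * \<bar>r - r0\<bar>"
    using assms by (intro circ_integral_const) (simp_all add: circ_eq_sphere infdist_sphere)
  moreover have "circ_integral r (\<lambda>x. \<bar>1 / r\<bar> powr 1) = 2 * pi * r * (1 / r)"
    using assms by (intro circ_integral_const) simp_all
  ultimately show ?thesis
    unfolding energy_def using assms by (simp add: algebra_simps)
qed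

definition energy_2_profile :: "real \<Rightarrow> real \<Rightarrow> real \<Rightarrow> real" where
  "energy_2_profile r0 \<eta> u = \<bar>u\<^sup>2 - r0\<bar> * u + \<eta> / u"

lemma energy_2_circ:
  assumes "r0 \<ge> 0" "r > 0"
  shows "energy 2 r0 \<eta> r = sqrt (2 * pi) * energy_2_profile r0 \<eta> (sqrt r)"
proof -
  have "circ_integral r (\<lambda>x. infdist x (circ r0) powr 2) = 2 * pi * r * \<bar>r - r0\<bar>\<^sup>2"
    using assms by (intro circ_integral_const) (simp_all add: circ_eq_sphere infdist_sphere)
  moreover have "circ_integral r (\<lambda>x. \<bar>1 / r\<bar> powr 2) = 2 * pi / r"
    using assms circ_integral_const[of r _ "(1 / r)\<^sup>2"] by (simp add: power2_eq_square)
  ultimately show ?thesis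
    unfolding energy_def energy_2_profile_def using assms
    by (simp add: powr_half_sqrt real_sqrt_mult real_sqrt_divide algebra_simps)
qed

lemma energy_2_profile_min_at_data:
  assumes "a > 0" "u > 0" "0 \<le> \<eta>" "\<eta> \<le> 2 * a ^ 4"
  shows "energy_2_profile (a\<^sup>2) \<eta> a \<le> energy_2_profile (a\<^sup>2) \<eta> u"
proof (cases "a \<le> u")
  case True
  then have "a\<^sup>2 \<le> u\<^sup>2" using assms(1) by (simp add: power_mono)
  then have "u * a * (energy_2_profile (a\<^sup>2) \<eta> u - energy_2_profile (a\<^sup>2) \<eta> a)
      = (u - a) * ((u + a) * u\<^sup>2 * a - \<eta>)"
    unfolding energy_2_profile_def using assms(1,2) by (simp add: field_simps power2_eq_square)
  moreover have "2 * a ^ 4 \<le> (u + a) * u\<^sup>2 * a"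
  proof -
    have "2 * a * a\<^sup>2 \<le> (u + a) * u\<^sup>2"
      using True \<open>a\<^sup>2 \<le> u\<^sup>2\<close> assms(1) by (intro mult_mono) auto
    then have "2 * a * a\<^sup>2 * a \<le> (u + a) * u\<^sup>2 * a"
      using assms(1) by (simp add: mult_right_mono)
    then show ?thesis by (simp add: eval_nat_numeral)
  qed
  ultimately have "0 \<le> u * a * (energy_2_profile (a\<^sup>2) \<eta> u - energy_2_profile (a\<^sup>2) \<eta> a)"
    using True assms(4) by simp
  then show ?thesis using mult_pos_pos[OF assms(2,1)] by (simp add: zero_le_mult_iff)
next
  case False
  then have "u\<^sup>2 \<le> a\<^sup>2" using assms(2) by (simp add: power_mono)
  moreover have "\<eta> / a \<le> \<eta> / u" using False assms by (simp add: frac_le)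
  moreover have "0 \<le> (a\<^sup>2 - u\<^sup>2) * u" using \<open>u\<^sup>2 \<le> a\<^sup>2\<close> assms(2) by simp
  moreover have "energy_2_profile (a\<^sup>2) \<eta> u = (a\<^sup>2 - u\<^sup>2) * u + \<eta> / u"
    using \<open>u\<^sup>2 \<le> a\<^sup>2\<close> by (simp add: energy_2_profile_def)
  moreover have "energy_2_profile (a\<^sup>2) \<eta> a = \<eta> / a"
    by (simp add: energy_2_profile_def)
  ultimately show ?thesis by linarith
qed

lemma energy_2_profile_min_at_critical:
  assumes "0 < a" "a \<le> b" "a \<le> u" "\<eta> = b\<^sup>2 * (3 * b\<^sup>2 - a\<^sup>2)"
  shows "energy_2_profile (a\<^sup>2) \<eta> b \<le> energy_2_profile (a\<^sup>2) \<eta> u"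
proof -
  have "a\<^sup>2 \<le> u\<^sup>2" "a\<^sup>2 \<le> b\<^sup>2" using assms(1-3) by (simp_all add: power_mono)
  then have factored: "u * b * (energy_2_profile (a\<^sup>2) \<eta> u - energy_2_profile (a\<^sup>2) \<eta> b)
      = b * (u - b)\<^sup>2 * (u\<^sup>2 + 2 * u * b + 3 * b\<^sup>2 - a\<^sup>2)"
    unfolding energy_2_profile_def assms(4) using assms(1-3)
    by (simp add: field_simps power2_eq_square)
  have "0 \<le> u\<^sup>2 + 2 * u * b + 3 * b\<^sup>2 - a\<^sup>2"
    using \<open>a\<^sup>2 \<le> b\<^sup>2\<close> zero_le_power2[of u] zero_le_power2[of b]
      mult_nonneg_nonneg[of u b] assms(1-3)
    by linarith
  then have "0 \<le> b * (u - b)\<^sup>2 * (u\<^sup>2 + 2 * u * b + 3 * b\<^sup>2 - a\<^sup>2)"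
    using assms(1,2) by simp
  then have "0 \<le> u * b * (energy_2_profile (a\<^sup>2) \<eta> u - energy_2_profile (a\<^sup>2) \<eta> b)"
    by (simp only: factored)
  moreover have "0 < u * b" using assms(1-3) by simp
  ultimately show ?thesis by (simp add: zero_le_mult_iff)
qed

lemma critical_radius:
  fixes r0 \<eta> :: real
  defines "rc \<equiv> (r0 + sqrt (r0\<^sup>2 + 12 * \<eta>)) / 6"
  assumes "r0 > 0" "\<eta> > 2 * r0\<^sup>2"
  shows "r0 < rc" and "\<eta> = rc * (3 * rc - r0)"
proof -
  define S where "S = sqrt (r0\<^sup>2 + 12 * \<eta>)"
  have "0 \<le> r0\<^sup>2 + 12 * \<eta>" using assms(3) zero_le_power2[of r0] by linarith
  then have S: "S\<^sup>2 = r0\<^sup>2 + 12 * \<eta>" "S \<ge> 0" by (simp_all add: S_def)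
  then have "(5 * r0)\<^sup>2 < S\<^sup>2" using assms(3) by (simp add: power_mult_distrib)
  then have "5 * r0 < S" using S(2) by (rule power_less_imp_less_base)
  then show "r0 < rc" by (simp add: rc_def S_def)
  show "\<eta> = rc * (3 * rc - r0)"
    using S(1) unfolding rc_def S_def[symmetric] by (simp add: field_simps power2_eq_square)
qed

lemma local_minimizer_if_min:
  assumes "a > 0" "\<And>r. r > 0 \<Longrightarrow> f a \<le> f r"
  shows "local_minimizer f a"
  using assms unfolding local_minimizer_def by blast

lemma local_minimizer_energy_1_data:
  assumes "r0 > 0" "\<eta> \<ge> 0"
  shows "local_minimizer (energy 1 r0 \<eta>) r0"
  using assms by (intro local_minimizer_if_min) (simp_all add: energy_1_circ)

lemma local_minimizer_energy_2_data:
  assumes "r0 > 0" "0 \<le> \<eta>" "\<eta> \<le> 2 * r0\<^sup>2"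
  shows "local_minimizer (energy 2 r0 \<eta>) r0"
proof (rule local_minimizer_if_min)
  fix r :: real assume "r > 0"
  have "(sqrt r0) ^ 4 = r0\<^sup>2"
    using assms(1) by (metis real_sqrt_pow2 less_imp_le power_mult numeral_Bit0 mult_2_right)
  then have "energy_2_profile ((sqrt r0)\<^sup>2) \<eta> (sqrt r0)
      \<le> energy_2_profile ((sqrt r0)\<^sup>2) \<eta> (sqrt r)"
    using assms \<open>r > 0\<close> by (intro energy_2_profile_min_at_data) simp_all
  then show "energy 2 r0 \<eta> r0 \<le> energy 2 r0 \<eta> r"
    using assms(1) \<open>r > 0\<close> by (simp add: energy_2_circ)
qed (fact assms(1))

lemma local_minimizer_energy_2_critical:
  assumes "r0 > 0" "\<eta> > 2 * r0\<^sup>2"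
  shows "local_minimizer (energy 2 r0 \<eta>) ((r0 + sqrt (r0\<^sup>2 + 12 * \<eta>)) / 6)"
proof -
  define rc where "rc = (r0 + sqrt (r0\<^sup>2 + 12 * \<eta>)) / 6"
  have rc: "r0 < rc" "\<eta> = rc * (3 * rc - r0)"
    using critical_radius[OF assms] by (simp_all add: rc_def)
  have "energy 2 r0 \<eta> rc \<le> energy 2 r0 \<eta> r" if "r0 < r" for r
  proof -
    have "energy_2_profile ((sqrt r0)\<^sup>2) \<eta> (sqrt rc)
        \<le> energy_2_profile ((sqrt r0)\<^sup>2) \<eta> (sqrt r)"
      using assms(1) rc that by (intro energy_2_profile_min_at_critical) simp_all
    then show ?thesis using assms(1) rc(1) that by (simp add: energy_2_circ)
  qed
  moreover have "r0 < r" if "\<bar>r - rc\<bar> < rc - r0" for r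
    using that by linarith
  ultimately show ?thesis
    unfolding local_minimizer_def rc_def[symmetric] using assms(1) rc(1)
    by (metis diff_gt_0_iff_gt order_less_trans)
qed

theorem proposition2:
  fixes r0 \<eta> :: real
  assumes "r0 > 0" and "\<eta> > 0"
  shows "local_minimizer (energy 1 r0 \<eta>) r0
         \<and> (\<eta> \<le> 2 * r0^2 \<longrightarrow> local_minimizer (energy 2 r0 \<eta>) r0)
         \<and> (\<eta> > 2 * r0^2 \<longrightarrow>
               local_minimizer (energy 2 r0 \<eta>) ((r0 + sqrt (r0^2 + 12 * \<eta>)) / 6))"
  using assms local_minimizer_energy_1_data[of r0 \<eta>] local_minimizer_energy_2_data[of r0 \<eta>]
    local_minimizer_energy_2_critical[of r0 \<eta>] by simp

end
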